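(* Let $A$ be a non-zero $n\times m$ matrix with entries in $[0,1]$, let $v$ be the value of the zero-sum game $A$, and let $x^*\in\Delta_n$ be any minimax strategy of the row player (i.e. $f(x^* )=v$). Suppose the row player plays the multiplicative weight update (MWU) algorithm with a non-increasing step size sequence $(\mu_t)$ for which there exists $t'\in\mathbb{N}$ with $\mu_{t'}\le 1$, and the column player plays the LRCA algorithm. Then $$RE(x^*\|x_{2k-1})-RE(x^*\|x_{2k+1})\ \ge\ \tfrac12\,\mu_{2k}\,\alpha_{2k}\,\big(f(x_{2k-1})-v\big)\qquad\text{for all }k\in\mathbb{N}\text{ with }2k\ge t',$$ where $\alpha_{2k}$ is the mixing coefficient used by LRCA at round $2k$.
   Context: Repeated two-player zero-sum game: $A$ is an $n\times m$ non-zero matrix with entries in $[0,1]$; $\Delta_n,\Delta_m$ are the probability simplices. At round $t=1,2,\dots$ the row player plays $x_t\in\Delta_n$, the column player plays $y_t\in\Delta_m$; the row player wants to minimize $x_t^\top Ay_t$, the column player to maximize it. $v=\max_{y}\min_x x^\top Ay=\min_x\max_y x^\top Ay$ is the value of the game and $f(x):=\max_{y\in\Delta_m}x^\top Ay$. A minimax strategy of the row player is $x$ with $f(x)=v$; a minimax strategy of the column player is $y$ with $\min_{x\in\Delta_n}x^\top Ay=v$. Relative entropy: $RE(X_1\|X_2)=\sum_{i=1}^n X_1(i)\log\frac{X_1(i)}{X_2(i)}$. MWU for the row player: starting from an initial $x_1$ with all entries positive, $x_{t+1}(i)=x_t(i)e^{-\mu_t e_i^\top Ay_t}/Z_t$ with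 $Z_t=\sum_{j}x_t(j)e^{-\mu_t e_j^\top Ay_t}$, $\mu_t\ge 0$, $e_i$ the $i$-th unit vector. LRCA algorithm for the column player (who knows $A$, and fixes one minimax strategy $y^*$ of the column player): at odd rounds $t$, $y_t=y^*$; at even rounds $t$, let $e_t\in\arg\max_{e\in\{e_1,\dots,e_m\}}x_{t-1}^\top Ae$ (unit vectors in $\mathbb{R}^m$), $\alpha_t=\frac{f(x_{t-1})-v}{\max(n/4,\,2)}$, and $y_t=(1-\alpha_t)y^*+\alpha_t e_t$. *)

theory Defs
  imports "HOL-Analysis.Analysis"
begin

text \<open>Matrix A is n x m with rows indexed by 'n and columns by 'm;
  the payoff of (x,y) is x^T A y = x \<bullet> (A *v y).\<close>

definition prob_simplex :: "(real ^ 'k) set" where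
  "prob_simplex = {x. (\<forall>i. 0 \<le> x $ i) \<and> (\<Sum>i\<in>UNIV. x $ i) = 1}"

definition payoff :: "real ^ 'm ^ 'n \<Rightarrow> real ^ 'n \<Rightarrow> real ^ 'm \<Rightarrow> real" where
  "payoff A x y = x \<bullet> (A *v y)"

definition fmax :: "real ^ 'm ^ 'n \<Rightarrow> real ^ 'n \<Rightarrow> real" where
  "fmax A x = (SUP y\<in>prob_simplex. payoff A x y)"

definition game_value :: "real ^ 'm ^ 'n \<Rightarrow> real" where
  "game_value A = (INF x\<in>prob_simplex. fmax A x)"

definition row_minimax :: "real ^ 'm ^ 'n \<Rightarrow> real ^ 'n \<Rightarrow> bool" where
  "row_minimax A x \<longleftrightarrow> x \<in> prob_simplex \<and> fmax A x = game_value A"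

definition col_minimax :: "real ^ 'm ^ 'n \<Rightarrow> real ^ 'm \<Rightarrow> bool" where
  "col_minimax A y \<longleftrightarrow> y \<in> prob_simplex \<and> (INF x\<in>prob_simplex. payoff A x y) = game_value A"

definition rel_entropy :: "real ^ 'n \<Rightarrow> real ^ 'n \<Rightarrow> real" where
  "rel_entropy X1 X2 = (\<Sum>i\<in>UNIV. X1 $ i * ln (X1 $ i / X2 $ i))"

definition unitv :: "'m \<Rightarrow> real ^ 'm" where
  "unitv j = axis j 1"

definition mwu_play :: "real ^ 'm ^ 'n \<Rightarrow> (nat \<Rightarrow> real) \<Rightarrow> (nat \<Rightarrow> real ^ 'n)
    \<Rightarrow> (nat \<Rightarrow> real ^ 'm) \<Rightarrow> bool" where
  "mwu_play A \<mu> x y \<longleftrightarrow>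
     x 1 \<in> prob_simplex \<and> (\<forall>i. 0 < x 1 $ i) \<and>
     (\<forall>t\<ge>1. 0 \<le> \<mu> t) \<and>
     (\<forall>t\<ge>1. \<forall>i. x (t + 1) $ i =
        x t $ i * exp (- \<mu> t * (A *v y t) $ i) /
        (\<Sum>j\<in>UNIV. x t $ j * exp (- \<mu> t * (A *v y t) $ j)))"

definition lrca_alpha :: "real ^ 'm ^ 'n \<Rightarrow> (nat \<Rightarrow> real ^ 'n) \<Rightarrow> nat \<Rightarrow> real" where
  "lrca_alpha A x t = (fmax A (x (t - 1)) - game_value A) / max (real CARD('n) / 4) 2"

definition lrca_play :: "real ^ 'm ^ 'n \<Rightarrow> real ^ 'm \<Rightarrow> (nat \<Rightarrow> real ^ 'n)
    \<Rightarrow> (nat \<Rightarrow> real ^ 'm) \<Rightarrow> bool" where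
  "lrca_play A ystar x y \<longleftrightarrow>
     (\<forall>t\<ge>1. odd t \<longrightarrow> y t = ystar) \<and>
     (\<forall>t\<ge>1. even t \<longrightarrow> (\<exists>j.
        (\<forall>j'. payoff A (x (t - 1)) (unitv j') \<le> payoff A (x (t - 1)) (unitv j)) \<and>
        y t = (1 - lrca_alpha A x t) *\<^sub>R ystar + lrca_alpha A x t *\<^sub>R unitv j))"

end

theory Submission
  imports Defs
begin

(* Over rounds 2k-1 and 2k the two MWU steps of the row player amount to a single multiplicative
   update of x = x_{2k-1} with the accumulated loss vector l = mu_{2k-1} A y* + mu_{2k} A y_{2k},
   and for such an update RE(x*||x) - RE(x*||x') = - x*.l - ln (sum_j x_j exp(-l_j)).
   Since x* is minimax, x*.l <= (mu_{2k-1} + mu_{2k}) v. Since y* is minimax and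
   y_{2k} = (1 - alpha) y* + alpha e with e a pure best response to x, every l_j is at least
   (mu_{2k-1} + mu_{2k} (1 - alpha)) v + c (A e)_j with c = mu_{2k} alpha. The bounds
   exp(-u) <= 1 - u + u^2/2 and ln s <= s - 1 then leave c (f - v) - c^2 f / 2 with
   f = f(x_{2k-1}) = x.(A e), and the choice of alpha guarantees c f <= f - v, so the
   second-order term costs at most half of the first-order gain. *)

lemma unitv_in_prob_simplex: "unitv j \<in> prob_simplex"
  unfolding prob_simplex_def unitv_def by (auto simp: axis_def)

lemma convex_prob_simplex: "convex prob_simplex"
  unfolding convex_def prob_simplex_def
  by (auto simp: sum.distrib simp flip: sum_distrib_left)

lemma matrix_vector_mult_unitv: "A *v unitv j = column j A"
  unfolding unitv_def by (rule matrix_vector_mult_basis)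

lemma matrix_vector_mult_nth_eq_payoff: "(A *v y) $ i = payoff A (unitv i) y"
  unfolding payoff_def unitv_def by (simp add: cart_eq_inner_axis inner_commute)

lemma payoff_eq_sum_unitv: "payoff A x y = (\<Sum>j\<in>UNIV. y $ j * payoff A x (unitv j))"
proof -
  have "(\<Sum>j\<in>UNIV. y $ j * payoff A x (unitv j)) = (\<Sum>j\<in>UNIV. \<Sum>i\<in>UNIV. y $ j * (x $ i * A $ i $ j))"
    by (simp add: payoff_def matrix_vector_mult_unitv inner_vec_def column_def sum_distrib_left)
  also have "\<dots> = (\<Sum>i\<in>UNIV. x $ i * (\<Sum>j\<in>UNIV. A $ i $ j * y $ j))"
    by (subst sum.swap) (simp add: sum_distrib_left algebra_simps)
  finally show ?thesis by (simp add: payoff_def inner_vec_def matrix_vector_mult_def)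
qed

lemma inner_prob_simplex_le_one:
  fixes q b :: "real ^ 'n"
  assumes "q \<in> prob_simplex" "\<And>i. b $ i \<le> 1"
  shows "q \<bullet> b \<le> 1"
proof -
  have "q \<bullet> b \<le> (\<Sum>i\<in>UNIV. q $ i)"
    unfolding inner_vec_def using assms unfolding prob_simplex_def
    by (intro sum_mono) (simp add: mult_left_le)
  then show ?thesis using assms(1) unfolding prob_simplex_def by simp
qed

lemma inner_prob_simplex_nonneg:
  fixes q b :: "real ^ 'n"
  assumes "q \<in> prob_simplex" "\<And>i. 0 \<le> b $ i"
  shows "0 \<le> q \<bullet> b"
  using assms unfolding inner_vec_def prob_simplex_def by (intro sum_nonneg) auto

lemma payoff_nonneg:
  assumes "\<forall>i j. 0 \<le> A $ i $ j \<and> A $ i $ j \<le> 1" "x \<in> prob_simplex" "y \<in> prob_simplex"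
  shows "0 \<le> payoff A x y"
  using assms unfolding payoff_def inner_vec_def matrix_vector_mult_def prob_simplex_def
  by (auto intro!: sum_nonneg mult_nonneg_nonneg)

lemma payoff_le_one:
  assumes "\<forall>i j. 0 \<le> A $ i $ j \<and> A $ i $ j \<le> 1" "x \<in> prob_simplex" "y \<in> prob_simplex"
  shows "payoff A x y \<le> 1"
proof -
  have "(A *v y) $ i \<le> 1" for i
    using inner_prob_simplex_le_one[OF assms(3), of "A $ i"] assms(1)
    by (simp add: matrix_vector_mult_def inner_vec_def mult.commute)
  then show ?thesis unfolding payoff_def using assms(2) by (rule inner_prob_simplex_le_one[rotated])
qed

lemma payoff_le_fmax:
  assumes "\<forall>i j. 0 \<le> A $ i $ j \<and> A $ i $ j \<le> 1" "x \<in> prob_simplex" "y \<in> prob_simplex"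
  shows "payoff A x y \<le> fmax A x"
  unfolding fmax_def using payoff_le_one[OF assms(1,2)]
  by (intro cSUP_upper[OF assms(3)] bdd_aboveI[of _ 1]) auto

lemma fmax_nonneg:
  assumes "\<forall>i j. 0 \<le> A $ i $ j \<and> A $ i $ j \<le> 1" "x \<in> prob_simplex"
  shows "0 \<le> fmax A x"
  using payoff_nonneg[OF assms unitv_in_prob_simplex] payoff_le_fmax[OF assms unitv_in_prob_simplex]
  by (rule order_trans)

lemma fmax_le_one:
  assumes "\<forall>i j. 0 \<le> A $ i $ j \<and> A $ i $ j \<le> 1" "x \<in> prob_simplex"
  shows "fmax A x \<le> 1"
  unfolding fmax_def using unitv_in_prob_simplex payoff_le_one[OF assms]
  by (intro cSUP_least) auto

lemma game_value_nonneg: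
  assumes "\<forall>i j. 0 \<le> A $ i $ j \<and> A $ i $ j \<le> 1"
  shows "0 \<le> game_value A"
  unfolding game_value_def using unitv_in_prob_simplex fmax_nonneg[OF assms]
  by (intro cINF_greatest) auto

lemma game_value_le_fmax:
  assumes "\<forall>i j. 0 \<le> A $ i $ j \<and> A $ i $ j \<le> 1" "x \<in> prob_simplex"
  shows "game_value A \<le> fmax A x"
  unfolding game_value_def using fmax_nonneg[OF assms(1)]
  by (intro cINF_lower[OF _ assms(2)] bdd_belowI[of _ 0]) auto

lemma game_value_le_payoff_col_minimax:
  assumes "\<forall>i j. 0 \<le> A $ i $ j \<and> A $ i $ j \<le> 1" "col_minimax A y" "x \<in> prob_simplex"
  shows "game_value A \<le> payoff A x y"
proof -
  have "y \<in> prob_simplex" and "game_value A = (INF x\<in>prob_simplex. payoff A x y)"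
    using assms(2) unfolding col_minimax_def by auto
  with payoff_nonneg[OF assms(1)] show ?thesis
    by (metis (no_types, lifting) assms(3) bdd_belowI2 cINF_lower)
qed

lemma fmax_eq_payoff_best_response:
  assumes best: "\<forall>j'. payoff A x (unitv j') \<le> payoff A x (unitv j)"
  shows "fmax A x = payoff A x (unitv j)"
  unfolding fmax_def
proof (rule cSup_eq_maximum)
  show "payoff A x (unitv j) \<in> payoff A x ` prob_simplex"
    using unitv_in_prob_simplex by blast
next
  fix z assume "z \<in> payoff A x ` prob_simplex"
  then obtain y where y: "y \<in> prob_simplex" and z: "z = payoff A x y" by blast
  have "z = (\<Sum>k\<in>UNIV. y $ k * payoff A x (unitv k))"
    unfolding z by (rule payoff_eq_sum_unitv)
  also have "\<dots> \<le> (\<Sum>k\<in>UNIV. y $ k * payoff A x (unitv j))"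
    using y best unfolding prob_simplex_def by (intro sum_mono mult_left_mono) auto
  also have "\<dots> = payoff A x (unitv j)"
    using y unfolding prob_simplex_def by (simp flip: sum_distrib_right)
  finally show "z \<le> payoff A x (unitv j)" .
qed

definition mw_update :: "real ^ 'n \<Rightarrow> real ^ 'n \<Rightarrow> real ^ 'n" where
  "mw_update q l = (\<chi> i. q $ i * exp (- l $ i) / (\<Sum>j\<in>UNIV. q $ j * exp (- l $ j)))"

lemma mw_update_nth:
  "mw_update q l $ i = q $ i * exp (- l $ i) / (\<Sum>j\<in>UNIV. q $ j * exp (- l $ j))"
  by (simp add: mw_update_def)

lemma sum_mult_exp_pos:
  fixes q l :: "real ^ 'n"
  assumes "\<And>i. 0 < q $ i"
  shows "0 < (\<Sum>j\<in>UNIV. q $ j * exp (- l $ j))"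
  using assms by (intro sum_pos) auto

lemma mw_update_pos:
  assumes "\<And>i. 0 < q $ i"
  shows "0 < mw_update q l $ i"
  using assms sum_mult_exp_pos[OF assms] by (simp add: mw_update_nth)

lemma mw_update_in_prob_simplex:
  assumes "\<And>i. 0 < q $ i"
  shows "mw_update q l \<in> prob_simplex"
  using mw_update_pos[OF assms] sum_mult_exp_pos[OF assms, of l]
  unfolding prob_simplex_def
  by (auto simp: mw_update_nth less_imp_le simp flip: sum_divide_distrib)

lemma mw_update_mw_update:
  assumes "\<And>i. 0 < q $ i"
  shows "mw_update (mw_update q l1) l2 = mw_update q (l1 + l2)"
proof -
  define Z where "Z = (\<Sum>j\<in>UNIV. q $ j * exp (- l1 $ j))"
  have "0 < Z" unfolding Z_def by (rule sum_mult_exp_pos[OF assms])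
  have step: "mw_update q l1 $ i * exp (- l2 $ i) = q $ i * exp (- (l1 + l2) $ i) / Z" for i
    by (simp add: mw_update_nth Z_def exp_diff exp_minus field_simps)
  show ?thesis
    unfolding vec_eq_iff mw_update_nth[of "mw_update q l1"] step
    using \<open>0 < Z\<close> by (simp add: mw_update_nth Z_def flip: sum_divide_distrib)
qed

lemma rel_entropy_diff_mw_update:
  assumes "p \<in> prob_simplex" "\<And>i. 0 < q $ i"
  shows "rel_entropy p q - rel_entropy p (mw_update q l)
    = - (p \<bullet> l) - ln (\<Sum>j\<in>UNIV. q $ j * exp (- l $ j))"
proof -
  define Z where "Z = (\<Sum>j\<in>UNIV. q $ j * exp (- l $ j))"
  have "0 < Z" unfolding Z_def by (rule sum_mult_exp_pos[OF assms(2)])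
  have summand: "p $ i * ln (p $ i / q $ i) - p $ i * ln (p $ i / mw_update q l $ i)
      = p $ i * (- l $ i - ln Z)" for i
  proof (cases "p $ i = 0")
    case False
    then have "0 < p $ i" using assms(1) unfolding prob_simplex_def by (simp add: order_less_le)
    then show ?thesis
      using assms(2)[of i] \<open>0 < Z\<close>
      by (simp add: mw_update_nth Z_def[symmetric] ln_div ln_mult algebra_simps)
  qed simp
  have "rel_entropy p q - rel_entropy p (mw_update q l) = (\<Sum>i\<in>UNIV. p $ i * (- l $ i - ln Z))"
    unfolding rel_entropy_def by (simp only: summand flip: sum_subtractf)
  also have "\<dots> = - (p \<bullet> l) - ln Z * (\<Sum>i\<in>UNIV. p $ i)"
    by (simp add: inner_vec_def algebra_simps sum_subtractf sum_distrib_left sum_negf)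
  finally show ?thesis using assms(1) unfolding prob_simplex_def Z_def by simp
qed

lemma mwu_play_step:
  assumes "mwu_play A \<mu> x y" "1 \<le> t"
  shows "x (t + 1) = mw_update (x t) (\<mu> t *\<^sub>R (A *v y t))"
  using assms unfolding mwu_play_def by (simp add: vec_eq_iff mw_update_nth)

lemma mwu_play_pos:
  assumes "mwu_play A \<mu> x y" "1 \<le> t"
  shows "0 < x t $ i"
  using assms(2)
proof (induction t arbitrary: i rule: nat_induct_at_least)
  case base
  then show ?case using assms(1) unfolding mwu_play_def by auto
next
  case (Suc t)
  then show ?case using mwu_play_step[OF assms(1) Suc.hyps] by (simp add: mw_update_pos)
qed

lemma mwu_play_in_prob_simplex:
  assumes "mwu_play A \<mu> x y" "1 \<le> t"
  shows "x t \<in> prob_simplex"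
proof (cases "t = 1")
  case True
  then show ?thesis using assms(1) unfolding mwu_play_def by simp
next
  case False
  with assms(2) have "1 \<le> t - 1" and "t = (t - 1) + 1" by auto
  then show ?thesis
    using mwu_play_step[OF assms(1)] mwu_play_pos[OF assms(1)] mw_update_in_prob_simplex by metis
qed

lemma mwu_play_two_steps:
  assumes "mwu_play A \<mu> x y" "1 \<le> t"
  shows "x (t + 2) = mw_update (x t) (\<mu> t *\<^sub>R (A *v y t) + \<mu> (t + 1) *\<^sub>R (A *v y (t + 1)))"
proof -
  have "x (t + 2) = x ((t + 1) + 1)" by simp
  also have "\<dots> = mw_update (x (t + 1)) (\<mu> (t + 1) *\<^sub>R (A *v y (t + 1)))"
    using assms(2) by (intro mwu_play_step[OF assms(1)]) simp
  also have "x (t + 1) = mw_update (x t) (\<mu> t *\<^sub>R (A *v y t))"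
    by (rule mwu_play_step[OF assms])
  finally show ?thesis by (simp only: mw_update_mw_update[OF mwu_play_pos[OF assms]])
qed

lemma exp_minus_le_quadratic:
  fixes u :: real
  assumes "0 \<le> u"
  shows "exp (- u) \<le> 1 - u + u\<^sup>2 / 2"
proof -
  let ?g = "\<lambda>u::real. 1 - u + u\<^sup>2 / 2 - exp (- u)"
  have "?g 0 \<le> ?g u"
  proof (rule DERIV_nonneg_imp_nondecreasing[OF assms])
    fix z :: real assume "0 \<le> z"
    have "DERIV ?g z :> z - 1 + exp (- z)"
      by (auto intro!: derivative_eq_intros simp: power2_eq_square)
    moreover have "0 \<le> z - 1 + exp (- z)" using exp_ge_add_one_self[of "- z"] by simp
    ultimately show "\<exists>d. DERIV ?g z :> d \<and> 0 \<le> d" by blast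
  qed
  then show ?thesis by simp
qed

lemma ln_sum_mult_exp_le:
  fixes q l b :: "real ^ 'n"
  assumes q: "q \<in> prob_simplex" "\<And>j. 0 < q $ j"
    and l: "\<And>j. K + c * b $ j \<le> l $ j"
    and b: "\<And>j. 0 \<le> b $ j" "\<And>j. b $ j \<le> 1"
    and "0 \<le> c"
  shows "ln (\<Sum>j\<in>UNIV. q $ j * exp (- l $ j)) \<le> - K - (c - c\<^sup>2 / 2) * (q \<bullet> b)"
proof -
  define S where "S = 1 - (c - c\<^sup>2 / 2) * (q \<bullet> b)"
  have exp_l: "exp (- l $ j) \<le> exp (- K) * (1 - (c - c\<^sup>2 / 2) * b $ j)" for j
  proof -
    have "exp (- l $ j) \<le> exp (- K) * exp (- (c * b $ j))"
      using l[of j] by (simp flip: exp_add)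
    also have "exp (- (c * b $ j)) \<le> 1 - c * b $ j + (c * b $ j)\<^sup>2 / 2"
      using \<open>0 \<le> c\<close> b by (intro exp_minus_le_quadratic) simp
    also have "(c * b $ j)\<^sup>2 \<le> c\<^sup>2 * b $ j"
    proof -
      have "b $ j * b $ j \<le> b $ j" using b[of j] by (simp add: mult_left_le)
      then have "c\<^sup>2 * (b $ j * b $ j) \<le> c\<^sup>2 * b $ j" by (rule mult_left_mono) simp
      then show ?thesis by (simp add: power2_eq_square mult_ac)
    qed
    finally show ?thesis by (simp add: algebra_simps)
  qed
  have "(\<Sum>j\<in>UNIV. q $ j * exp (- l $ j)) \<le> (\<Sum>j\<in>UNIV. q $ j * (exp (- K) * (1 - (c - c\<^sup>2 / 2) * b $ j)))"
    using q(2) exp_l by (intro sum_mono mult_left_mono) (auto simp: less_imp_le)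
  also have "\<dots> = exp (- K) * S"
    using q(1) unfolding S_def prob_simplex_def inner_vec_def
    by (simp add: algebra_simps sum_subtractf sum.distrib sum_distrib_left flip: sum_distrib_right)
  finally have sum_le: "(\<Sum>j\<in>UNIV. q $ j * exp (- l $ j)) \<le> exp (- K) * S" .
  have "(c - c\<^sup>2 / 2) * (q \<bullet> b) \<le> 1 / 2 * 1"
  proof (rule order_trans[OF mult_right_mono mult_left_mono])
    show "c - c\<^sup>2 / 2 \<le> 1 / 2" using zero_le_power2[of "c - 1"] by (simp add: power2_diff)
  qed (use inner_prob_simplex_nonneg[OF q(1) b(1)] inner_prob_simplex_le_one[OF q(1) b(2)] in auto)
  then have "0 < S" unfolding S_def by simp
  have "ln (\<Sum>j\<in>UNIV. q $ j * exp (- l $ j)) \<le> ln (exp (- K) * S)"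
    using sum_le sum_mult_exp_pos[OF q(2), of l] \<open>0 < S\<close> by simp
  also have "\<dots> = - K + ln S" using \<open>0 < S\<close> by (simp add: ln_mult)
  also have "\<dots> \<le> - K + (S - 1)" using ln_le_minus_one[OF \<open>0 < S\<close>] by simp
  finally show ?thesis unfolding S_def by simp
qed

lemma lrca_alpha_bounds:
  fixes A :: "real ^ 'm ^ 'n" and x :: "nat \<Rightarrow> real ^ 'n"
  assumes "\<forall>i j. 0 \<le> A $ i $ j \<and> A $ i $ j \<le> 1" "x (t - 1) \<in> prob_simplex"
  shows "0 \<le> lrca_alpha A x t" and "lrca_alpha A x t \<le> 1"
    and "lrca_alpha A x t * fmax A (x (t - 1)) \<le> fmax A (x (t - 1)) - game_value A"
proof -
  define f where "f = fmax A (x (t - 1))"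
  define v where "v = game_value A"
  have "v \<le> f" "f \<le> 1" "0 \<le> v"
    unfolding f_def v_def using assms
    by (auto intro: game_value_le_fmax fmax_le_one game_value_nonneg)
  have \<alpha>: "lrca_alpha A x t = (f - v) / max (real CARD('n) / 4) 2"
    unfolding lrca_alpha_def f_def v_def ..
  show "0 \<le> lrca_alpha A x t" unfolding \<alpha> using \<open>v \<le> f\<close> by simp
  have "(f - v) / max (real CARD('n) / 4) 2 \<le> (f - v) / 1"
    using \<open>v \<le> f\<close> by (intro divide_left_mono) auto
  then have "lrca_alpha A x t \<le> f - v" unfolding \<alpha> by simp
  then show "lrca_alpha A x t \<le> 1" using \<open>f \<le> 1\<close> \<open>0 \<le> v\<close> by linarith
  have "lrca_alpha A x t * f \<le> lrca_alpha A x t"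
    using \<open>f \<le> 1\<close> \<open>0 \<le> lrca_alpha A x t\<close> by (simp add: mult_left_le)
  with \<open>lrca_alpha A x t \<le> f - v\<close> show "lrca_alpha A x t * f \<le> f - v" by linarith
qed

lemma lrca_round_progress:
  fixes A :: "real ^ 'm ^ 'n" and p q :: "real ^ 'n" and ystar :: "real ^ 'm"
  assumes A: "\<forall>i j. 0 \<le> A $ i $ j \<and> A $ i $ j \<le> 1"
    and "row_minimax A p" "col_minimax A ystar"
    and q: "q \<in> prob_simplex" "\<And>i. 0 < q $ i"
    and best: "\<forall>j'. payoff A q (unitv j') \<le> payoff A q (unitv j)"
    and \<mu>: "0 \<le> \<mu>1" "0 \<le> \<mu>2" "\<mu>2 \<le> 1"
    and \<alpha>: "0 \<le> \<alpha>" "\<alpha> \<le> 1" "\<alpha> * fmax A q \<le> fmax A q - game_value A"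
  shows "1 / 2 * \<mu>2 * \<alpha> * (fmax A q - game_value A)
    \<le> rel_entropy p q - rel_entropy p
         (mw_update q (\<mu>1 *\<^sub>R (A *v ystar) + \<mu>2 *\<^sub>R (A *v ((1 - \<alpha>) *\<^sub>R ystar + \<alpha> *\<^sub>R unitv j))))"
proof -
  define v where "v = game_value A"
  define f where "f = fmax A q"
  define y2 where "y2 = (1 - \<alpha>) *\<^sub>R ystar + \<alpha> *\<^sub>R unitv j"
  define l where "l = \<mu>1 *\<^sub>R (A *v ystar) + \<mu>2 *\<^sub>R (A *v y2)"
  define c where "c = \<mu>2 * \<alpha>"
  have p: "p \<in> prob_simplex" "fmax A p = v" and ystar: "ystar \<in> prob_simplex"
    using assms(2,3) unfolding row_minimax_def col_minimax_def v_def by auto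
  have "y2 \<in> prob_simplex"
    unfolding y2_def using \<alpha>(1,2) ystar unitv_in_prob_simplex
    by (intro convexD[OF convex_prob_simplex]) auto
  have "p \<bullet> l = \<mu>1 * payoff A p ystar + \<mu>2 * payoff A p y2"
    by (simp add: l_def payoff_def inner_add_right)
  also have "\<dots> \<le> \<mu>1 * v + \<mu>2 * v"
    using payoff_le_fmax[OF A p(1) ystar] payoff_le_fmax[OF A p(1) \<open>y2 \<in> prob_simplex\<close>] p(2) \<mu>
    by (intro add_mono mult_left_mono) auto
  finally have p_l: "p \<bullet> l \<le> (\<mu>1 + \<mu>2) * v" by (simp add: algebra_simps)
  have l_lower: "(\<mu>1 + \<mu>2 * (1 - \<alpha>)) * v + c * column j A $ i \<le> l $ i" for i
  proof -
    have "v \<le> (A *v ystar) $ i"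
      unfolding v_def matrix_vector_mult_nth_eq_payoff
      by (rule game_value_le_payoff_col_minimax[OF A assms(3) unitv_in_prob_simplex])
    moreover have "l $ i = (\<mu>1 + \<mu>2 * (1 - \<alpha>)) * (A *v ystar) $ i + c * column j A $ i"
      by (simp add: l_def y2_def c_def matrix_vector_mult_unitv algebra_simps)
    ultimately show ?thesis using \<mu> \<alpha> by (simp add: mult_left_mono)
  qed
  have "0 \<le> c" unfolding c_def using \<mu> \<alpha> by simp
  have f: "f = q \<bullet> column j A"
    unfolding f_def fmax_eq_payoff_best_response[OF best] payoff_def matrix_vector_mult_unitv ..
  have ln_sum: "ln (\<Sum>j\<in>UNIV. q $ j * exp (- l $ j)) \<le> - ((\<mu>1 + \<mu>2 * (1 - \<alpha>)) * v) - (c - c\<^sup>2 / 2) * f"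
    unfolding f using A \<open>0 \<le> c\<close>
    by (intro ln_sum_mult_exp_le[OF q l_lower]) (auto simp: column_def)
  have "0 \<le> f" unfolding f_def by (rule fmax_nonneg[OF A q(1)])
  have "c * f \<le> \<alpha> * f"
    unfolding c_def using \<mu> \<alpha> \<open>0 \<le> f\<close> by (simp add: mult_left_le_one_le mult.assoc mult_le_cancel_right)
  also have "\<dots> \<le> f - v" using \<alpha>(3) unfolding f_def v_def .
  finally have "c * (c * f) \<le> c * (f - v)" using \<open>0 \<le> c\<close> by (rule mult_left_mono)
  moreover have "rel_entropy p q - rel_entropy p (mw_update q l) = - (p \<bullet> l) - ln (\<Sum>j\<in>UNIV. q $ j * exp (- l $ j))"
    by (rule rel_entropy_diff_mw_update[OF p(1) q(2)])
  moreover have "- ((\<mu>1 + \<mu>2) * v) + (\<mu>1 + \<mu>2 * (1 - \<alpha>)) * v + (c - c\<^sup>2 / 2) * f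
      = c * (f - v) - c * (c * f) / 2"
    by (simp add: c_def power2_eq_square algebra_simps)
  ultimately show ?thesis
    using p_l ln_sum unfolding l_def y2_def c_def f_def v_def by linarith
qed

theorem lemma4:
  fixes A :: "real ^ 'm ^ 'n" and xstar :: "real ^ 'n" and ystar :: "real ^ 'm"
    and \<mu> :: "nat \<Rightarrow> real" and x :: "nat \<Rightarrow> real ^ 'n" and y :: "nat \<Rightarrow> real ^ 'm"
    and t' :: nat
  assumes "A \<noteq> 0"
    and "\<forall>i j. 0 \<le> A $ i $ j \<and> A $ i $ j \<le> 1"
    and "row_minimax A xstar"
    and "col_minimax A ystar"
    and "mwu_play A \<mu> x y"
    and "lrca_play A ystar x y"
    and "\<forall>s t. 1 \<le> s \<longrightarrow> s \<le> t \<longrightarrow> \<mu> t \<le> \<mu> s"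
    and "1 \<le> t'" and "\<mu> t' \<le> 1"
  shows "\<forall>k::nat. 1 \<le> k \<longrightarrow> t' \<le> 2 * k \<longrightarrow>
     rel_entropy xstar (x (2 * k - 1)) - rel_entropy xstar (x (2 * k + 1))
       \<ge> 1 / 2 * \<mu> (2 * k) * lrca_alpha A x (2 * k) * (fmax A (x (2 * k - 1)) - game_value A)"
proof (intro allI impI)
  fix k :: nat assume "1 \<le> k" "t' \<le> 2 * k"
  define t where "t = 2 * k - 1"
  define \<alpha> where "\<alpha> = lrca_alpha A x (2 * k)"
  have t: "1 \<le> t" "odd t" "t + 1 = 2 * k" "1 \<le> 2 * k" "even (2 * k)" "t + 2 = 2 * k + 1"
    using \<open>1 \<le> k\<close> unfolding t_def by auto
  have "y t = ystar" using assms(6) t(1,2) unfolding lrca_play_def by blast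
  obtain j where best: "\<forall>j'. payoff A (x t) (unitv j') \<le> payoff A (x t) (unitv j)"
    and y_2k: "y (2 * k) = (1 - \<alpha>) *\<^sub>R ystar + \<alpha> *\<^sub>R unitv j"
    using assms(6) t(4,5) unfolding lrca_play_def t_def \<alpha>_def by blast
  have x_t: "x t \<in> prob_simplex" "\<And>i. 0 < x t $ i"
    using mwu_play_in_prob_simplex[OF assms(5) t(1)] mwu_play_pos[OF assms(5) t(1)] by auto
  have x_2k1: "x (2 * k + 1)
      = mw_update (x t) (\<mu> t *\<^sub>R (A *v ystar) + \<mu> (2 * k) *\<^sub>R (A *v y (2 * k)))"
    using mwu_play_two_steps[OF assms(5) t(1)] unfolding t(3,6) \<open>y t = ystar\<close> .
  have \<mu>: "0 \<le> \<mu> t" "0 \<le> \<mu> (2 * k)" using assms(5) t(1,4) unfolding mwu_play_def by auto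
  have "\<mu> (2 * k) \<le> 1" using assms(7-9) \<open>t' \<le> 2 * k\<close> by (meson order_trans)
  have "x (2 * k - 1) \<in> prob_simplex" using x_t(1) unfolding t_def .
  note \<alpha>_bounds = lrca_alpha_bounds[where x = x and t = "2 * k", OF assms(2) this, folded \<alpha>_def t_def]
  show "1 / 2 * \<mu> (2 * k) * lrca_alpha A x (2 * k) * (fmax A (x (2 * k - 1)) - game_value A)
      \<le> rel_entropy xstar (x (2 * k - 1)) - rel_entropy xstar (x (2 * k + 1))"
    using lrca_round_progress[OF assms(2-4) x_t best \<mu> \<open>\<mu> (2 * k) \<le> 1\<close> \<alpha>_bounds]
    unfolding x_2k1 y_2k t_def \<alpha>_def .
qed

end
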